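(* Let $f:\mathbb{R}^d\to\mathbb{R}$ be convex and $M$-Lipschitz with $X^*\neq\emptyset$, satisfying $f(x)-f^*\ge\mu\,\mathrm{dist}(x,X^* )^p$ for all $x$, for some $\mu>0$, $p\ge1$. Run the Proximal Bundle Method with $\beta\in(0,1)$ and stepsizes $\rho_k=\mu^{2/p}(f(x_k)-f^* )^{1-2/p}$. Then for any $0<\epsilon\le f(x_0)-f^*$, the number of descent steps taken before an $\epsilon$-minimizer is found is at most $$\left\lceil\frac{2\log\left(\frac{f(x_0)-f^*}{\epsilon}\right)}{\beta}\right\rceil,$$ and the number of null steps taken before then is at most $$\begin{cases}\left(\dfrac{1}{1-(1-\beta/2)^{2-2/p}}\right)\dfrac{8M^2}{(1-\beta)^2\mu^{2/p}\epsilon^{2-2/p}} & p>1,\\[2mm] \dfrac{8M^2}{(1-\beta)^2\mu^2}\left\lceil\dfrac{2\log\left(\frac{f(x_0)-f^*}{\epsilon}\right)}{\beta}\right\rceil & p=1.\end{cases}$$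
   Context: Throughout, $f:\mathbb{R}^d\to\mathbb{R}$ is a proper closed convex function attaining its minimum $f^*=\inf f$ on the nonempty set $X^*=\{x: f(x)=f^*\}$; $\mathrm{dist}(x,S)=\inf_{y\in S}\|x-y\|$; $\partial f(x)$ is the convex subdifferential. A subgradient oracle returns, for any $x$, the value $f(x)$ and some $g(x)\in\partial f(x)$. Proximal Bundle Method: fix $\beta\in(0,1)$, $x_0=z_0\in\mathbb{R}^d$, $g_0=g(x_0)$, and the initial model $f_0(x)=f(x_0)+\langle g_0,x-x_0\rangle$. At iteration $k\ge0$, given a convex model $f_k:\mathbb{R}^d\to\mathbb{R}$ and stepsize $\rho_k>0$, compute $z_{k+1}=\operatorname{argmin}_z f_k(z)+\frac{\rho_k}{2}\|z-x_k\|^2$. If $\beta(f(x_k)-f_k(z_{k+1}))\le f(x_k)-f(z_{k+1})$, iteration $k$ is a descent step and $x_{k+1}=z_{k+1}$; otherwise it is a null step and $x_{k+1}=x_k$. Then a new convex model $f_{k+1}$ and stepsize $\rho_{k+1}$ are chosen satisfying, with $g_{k+1}=g(z_{k+1})$ and $s_{k+1}=\rho_k(x_k-z_{k+1})$: (1) $f_{k+1}(x)\le f(x)$ for all $x$; (2) $f_{k+1}(x)\ge f(z_{k+1})+\langle g_{k+1},x-z_{k+1}\rangle$ for all $x$; (3) if iteration $k$ was a null step, $f_{k+1}(x)\ge f_k(z_{k+1})+\langle s_{k+1},x-z_{k+1}\rangle$ for all $x$; (4) if iteration $k$ was a null step, $\rho_{k+1}\ge\rho_k$. An $\epsilon$-minimizer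 is a point $x$ with $f(x)-f^*\le\epsilon$. *)

theory Defs
  imports "HOL-Analysis.Analysis"
begin

definition is_subgradient :: "('a::real_inner \<Rightarrow> real) \<Rightarrow> 'a \<Rightarrow> 'a \<Rightarrow> bool" where
  "is_subgradient f x g \<longleftrightarrow> (\<forall>y. f y \<ge> f x + inner g (y - x))"

definition pbm_descent :: "real \<Rightarrow> ('a \<Rightarrow> real) \<Rightarrow> (nat \<Rightarrow> 'a \<Rightarrow> real) \<Rightarrow> (nat \<Rightarrow> 'a) \<Rightarrow> (nat \<Rightarrow> 'a) \<Rightarrow> nat \<Rightarrow> bool" where
  "pbm_descent \<beta> f fm x z k \<longleftrightarrow> \<beta> * (f (x k) - fm k (z (Suc k))) \<le> f (x k) - f (z (Suc k))"

end

(*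
  Write \<Delta>_k = f(x_k) - f^* and G_k = f(x_k) - (f_k(z_{k+1}) + \<rho>_k/2 |z_{k+1} - x_k|^2) for the
  proximal gap. Testing the proximal subproblem at a nearest minimiser, the growth condition and
  the choice of \<rho>_k give G_k \<ge> \<Delta>_k/2, so each descent step contracts \<Delta> by the factor
  1 - \<beta>/2; this counts the descent steps. During null steps x_k and \<rho>_k are frozen and
  averaging the aggregate and the cut gives G_{k+1} \<le> G_k - c G_k^2 with
  c = (1-\<beta>)^2 \<rho>_k / (4M^2), so 1/(c G_k) grows by one per null step. It starts positive
  and never exceeds 8M^2 / ((1-\<beta>)^2 \<mu>^(2/p) \<Delta>_k^(2-2/p)); summing this bound over the
  descent steps, a geometric series when p > 1, counts the null steps.
*)

theory Submission
  imports Defs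
begin

lemma inner_add_half_norm_sq_ge:
  fixes h e :: "'a::real_inner"
  assumes "0 < r"
  shows "- (norm h)\<^sup>2 / (2 * r) \<le> inner h e + r / 2 * (norm e)\<^sup>2"
proof -
  have expand: "(norm (r *\<^sub>R e + h))\<^sup>2 = r\<^sup>2 * (norm e)\<^sup>2 + 2 * r * inner h e + (norm h)\<^sup>2"
    unfolding power2_norm_eq_inner
    by (simp add: inner_add_left inner_add_right inner_commute power2_eq_square algebra_simps)
  have "0 \<le> (norm (r *\<^sub>R e + h))\<^sup>2 / (2 * r)"
    using assms by simp
  also have "\<dots> = inner h e + r / 2 * (norm e)\<^sup>2 + (norm h)\<^sup>2 / (2 * r)"
    unfolding expand using assms by (simp add: field_simps power2_eq_square)
  finally show ?thesis by simp
qed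

lemma norm_add_sq_le: "(norm (a + b))\<^sup>2 \<le> 2 * (norm a)\<^sup>2 + 2 * (norm (b::'a::real_inner))\<^sup>2"
proof -
  have "(norm (a + b))\<^sup>2 \<le> (norm a + norm b)\<^sup>2"
    by (simp add: norm_triangle_ineq power_mono)
  also have "\<dots> \<le> 2 * (norm a)\<^sup>2 + 2 * (norm b)\<^sup>2"
    using sum_squares_ge_zero[of "norm a - norm b" 0] by (simp add: power2_eq_square algebra_simps)
  finally show ?thesis .
qed

lemma subgradient_norm_le_lipschitz:
  assumes sub: "is_subgradient f u h" and lip: "\<forall>u v. \<bar>f u - f v\<bar> \<le> M * norm (u - v)"
    and "0 \<le> M"
  shows "norm h \<le> M"
proof (cases "h = 0")
  case False
  have "f u + (norm h)\<^sup>2 \<le> f (u + h)"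
    using sub unfolding is_subgradient_def power2_norm_eq_inner by (metis add_diff_cancel_left')
  moreover have "f (u + h) - f u \<le> M * norm h"
    using lip[rule_format, of "u + h" u] by simp
  ultimately have "norm h * norm h \<le> M * norm h"
    by (simp add: power2_eq_square)
  then show ?thesis using False by simp
qed (use assms in simp)

lemma reciprocal_gain_of_quadratic_decrease:
  fixes G G' c :: real
  assumes "0 < c" "0 < G" "0 < G'" "G' \<le> G - c * G\<^sup>2"
  shows "1 / (c * G) + 1 \<le> 1 / (c * G')"
proof -
  have pos: "0 < G - c * G\<^sup>2" using assms by linarith
  have "1 / (c * G) + 1 \<le> 1 / (c * (G - c * G\<^sup>2))"
    using assms pos by (simp add: field_simps power2_eq_square)
  also have "\<dots> \<le> 1 / (c * G')"
    using assms by (intro divide_left_mono mult_left_mono mult_pos_pos) auto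
  finally show ?thesis .
qed

lemma card_less_Suc_filter:
  "card {k. k < Suc N \<and> P k} = card {k. k < N \<and> P k} + (if P N then 1 else 0)"
proof -
  have "{k. k < Suc N \<and> P k} = (if P N then insert N else id) {k. k < N \<and> P k}"
    by (auto simp: less_Suc_eq)
  then show ?thesis by simp
qed

lemma geometric_budget_step:
  fixes B a b \<theta> :: real
  assumes "0 \<le> B" "0 < a" "0 < b" "0 < \<theta>" "\<theta> < 1" "b \<le> \<theta> * a"
  shows "B / a * \<theta> / (1 - \<theta>) + B / a \<le> B / b * \<theta> / (1 - \<theta>)"
proof -
  have "B / a * \<theta> / (1 - \<theta>) + B / a = B / (\<theta> * a) * \<theta> / (1 - \<theta>)"
    using assms by (simp add: field_simps)
  also have "\<dots> \<le> B / b * \<theta> / (1 - \<theta>)"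
    using assms by (intro divide_right_mono mult_right_mono divide_left_mono) auto
  finally show ?thesis .
qed

lemma stepsize_dist_sq_le:
  fixes \<mu> p \<Delta> d :: real
  assumes "0 < \<mu>" "1 \<le> p" "0 < \<Delta>" "0 \<le> d" and growth: "\<mu> * d powr p \<le> \<Delta>"
  shows "\<mu> powr (2 / p) * \<Delta> powr (1 - 2 / p) * d\<^sup>2 \<le> \<Delta>"
proof (cases "d = 0")
  case False
  have "\<mu> powr (2 / p) * d\<^sup>2 = (\<mu> * d powr p) powr (2 / p)"
    using assms False by (simp add: powr_mult powr_powr)
  also have "\<dots> \<le> \<Delta> powr (2 / p)"
    using assms False by (intro powr_mono2) auto
  finally have "\<Delta> powr (1 - 2 / p) * (\<mu> powr (2 / p) * d\<^sup>2) \<le> \<Delta> powr (1 - 2 / p) * \<Delta> powr (2 / p)"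
    by (intro mult_left_mono) auto
  also have "\<dots> = \<Delta>"
    using assms by (simp add: powr_add[symmetric])
  finally show ?thesis by (simp add: algebra_simps)
qed (use assms in simp)

lemma prox_gap_le_of_linear_minorant:
  fixes x z h :: "'a::real_inner"
  assumes "0 < r" and minorant: "\<forall>u. fx + inner h (u - x) \<le> m u"
  shows "r * (fx - (m z + r / 2 * (norm (z - x))\<^sup>2)) \<le> (norm h)\<^sup>2 / 2"
proof -
  have "fx - (norm h)\<^sup>2 / (2 * r) \<le> m z + r / 2 * (norm (z - x))\<^sup>2"
    using minorant[rule_format, of z] inner_add_half_norm_sq_ge[OF assms(1), of h "z - x"] by simp
  then show ?thesis
    using assms(1) by (simp add: field_simps)
qed

lemma two_cut_model_lower_bound:
  fixes x z w h :: "'a::real_inner"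
  assumes r: "0 < r" and a: "0 \<le> a" "a \<le> 1" and h: "norm h \<le> M"
    and agg: "m z + inner (r *\<^sub>R (x - z)) (w - z) \<le> m' w"
    and cut: "fz + inner h (w - z) \<le> m' w"
  shows "m z + r / 2 * (norm (z - x))\<^sup>2 + a * (fz - m z) - a\<^sup>2 * M\<^sup>2 / r
           - a\<^sup>2 * r * (norm (z - x))\<^sup>2
         \<le> m' w + r / 2 * (norm (w - x))\<^sup>2"
proof -
  \<comment> \<open>The (1 - a, a)-average of the two minorants plus the proximal term is a quadratic
    in w - z; its minimum is the bound.\<close>
  define d e where "d = z - x" and "e = w - z"
  define v where "v = a *\<^sub>R (h + r *\<^sub>R d)"
  have "x - z = - d" unfolding d_def by simp
  then have "m z - r * inner d e \<le> m' w" and "fz + inner h e \<le> m' w"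
    using agg cut unfolding e_def by simp_all
  then have "(1 - a) * (m z - r * inner d e) + a * (fz + inner h e) \<le> m' w"
    by (rule convex_bound_le) (use a in auto)
  moreover have "(norm (w - x))\<^sup>2 = (norm e)\<^sup>2 + 2 * inner d e + (norm d)\<^sup>2"
    unfolding d_def e_def dot_norm by (simp add: field_simps)
  ultimately have "m z + r / 2 * (norm d)\<^sup>2 + a * (fz - m z) + (inner v e + r / 2 * (norm e)\<^sup>2)
      \<le> m' w + r / 2 * (norm (w - x))\<^sup>2"
    unfolding v_def by (simp add: inner_add_left algebra_simps)
  moreover have "- (norm v)\<^sup>2 / (2 * r) \<le> inner v e + r / 2 * (norm e)\<^sup>2"
    by (rule inner_add_half_norm_sq_ge[OF r])
  moreover have "(norm v)\<^sup>2 / (2 * r) \<le> a\<^sup>2 * M\<^sup>2 / r + a\<^sup>2 * r * (norm d)\<^sup>2"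
  proof -
    have "(norm (h + r *\<^sub>R d))\<^sup>2 \<le> 2 * (norm h)\<^sup>2 + 2 * (norm (r *\<^sub>R d))\<^sup>2"
      by (rule norm_add_sq_le)
    also have "\<dots> \<le> 2 * M\<^sup>2 + 2 * r\<^sup>2 * (norm d)\<^sup>2"
      using h r by (simp add: power_mono power_mult_distrib)
    finally have "(norm v)\<^sup>2 \<le> a\<^sup>2 * (2 * M\<^sup>2 + 2 * r\<^sup>2 * (norm d)\<^sup>2)"
      unfolding v_def by (simp add: power_mult_distrib mult_left_mono)
    then show ?thesis
      using r by (simp add: field_simps power2_eq_square)
  qed
  ultimately show ?thesis
    unfolding d_def by linarith
qed

lemma null_step_prox_gap_decrease:
  fixes x z w h :: "'a::real_inner"
  assumes r: "0 < r" and M: "0 < M" and \<beta>: "0 < \<beta>" "\<beta> < 1"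
    and G: "G = fx - (m z + r / 2 * (norm (z - x))\<^sup>2)" "0 \<le> G" "r * G \<le> M\<^sup>2 / 2"
    and h: "norm h \<le> M"
    and null: "fx - fz < \<beta> * (fx - m z)"
    and agg: "m z + inner (r *\<^sub>R (x - z)) (w - z) \<le> m' w"
    and cut: "fz + inner h (w - z) \<le> m' w"
  shows "fx - (m' w + r / 2 * (norm (w - x))\<^sup>2) \<le> G - (1 - \<beta>)\<^sup>2 * G\<^sup>2 * r / (4 * M\<^sup>2)"
proof -
  define R where "R = (norm (z - x))\<^sup>2"
  define a where "a = (1 - \<beta>) * G * r / (2 * M\<^sup>2)"
  have "a = (1 - \<beta>) * (G * r / (2 * M\<^sup>2))"
    unfolding a_def by simp
  also have "\<dots> \<le> (1 - \<beta>) * (1 / 4)"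
    using G(3) M \<beta> by (intro mult_left_mono) (auto simp: field_simps)
  finally have a_le: "a \<le> (1 - \<beta>) / 4"
    by simp
  have a_ge: "0 \<le> a"
    unfolding a_def using \<beta> G(2) r by simp
  have "(1 - \<beta>) * (G + r / 2 * R) \<le> fz - m z"
    using null unfolding G(1) R_def by (simp add: algebra_simps)
  then have "a * ((1 - \<beta>) * (G + r / 2 * R)) \<le> a * (fz - m z)"
    using a_ge by (rule mult_left_mono)
  then have "a * (1 - \<beta>) * G + a * (1 - \<beta>) * r * R / 2 \<le> a * (fz - m z)"
    by (simp add: algebra_simps)
  moreover have "a * r * R * (2 * a) \<le> a * r * R * (1 - \<beta>)"
    using a_ge a_le r by (intro mult_left_mono) (auto simp: R_def)
  then have "a\<^sup>2 * r * R \<le> a * (1 - \<beta>) * r * R / 2"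
    by (simp add: algebra_simps power2_eq_square)
  moreover have "a * (1 - \<beta>) * G - a\<^sup>2 * M\<^sup>2 / r = (1 - \<beta>)\<^sup>2 * G\<^sup>2 * r / (4 * M\<^sup>2)"
    unfolding a_def using r M by (simp add: field_simps power2_eq_square)
  moreover have "m z + r / 2 * R + a * (fz - m z) - a\<^sup>2 * M\<^sup>2 / r - a\<^sup>2 * r * R
      \<le> m' w + r / 2 * (norm (w - x))\<^sup>2"
    unfolding R_def
    using two_cut_model_lower_bound[where m = m and m' = m', OF r a_ge _ h agg cut] a_le \<beta>
    by simp
  ultimately show ?thesis
    unfolding R_def using G(1) by linarith
qed

locale proximal_bundle_run =
  fixes f :: "'a::euclidean_space \<Rightarrow> real"
    and g :: "'a \<Rightarrow> 'a"
    and fstar M \<mu> p \<beta> \<epsilon> :: real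
    and x z :: "nat \<Rightarrow> 'a"
    and fm :: "nat \<Rightarrow> 'a \<Rightarrow> real"
    and \<rho> :: "nat \<Rightarrow> real"
  assumes lipschitz: "\<forall>u v. \<bar>f u - f v\<bar> \<le> M * norm (u - v)"
    and Xstar_ne: "\<exists>u. f u = fstar"
    and mu_pos: "\<mu> > 0" and p_ge: "p \<ge> 1"
    and growth: "\<forall>u. f u - fstar \<ge> \<mu> * (infdist u {v. f v = fstar}) powr p"
    and subgrad_oracle: "\<forall>u. is_subgradient f u (g u)"
    and beta: "0 < \<beta>" "\<beta> < 1"
    and fm0: "\<forall>u. fm 0 u = f (x 0) + inner (g (x 0)) (u - x 0)"
    and rho_def: "\<forall>k. \<rho> k = \<mu> powr (2 / p) * (f (x k) - fstar) powr (1 - 2 / p)"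
    and prox_step: "\<forall>k. f (x k) - fstar > \<epsilon> \<longrightarrow>
        (\<forall>u. fm k (z (Suc k)) + \<rho> k / 2 * (norm (z (Suc k) - x k))\<^sup>2
              \<le> fm k u + \<rho> k / 2 * (norm (u - x k))\<^sup>2)"
    and descent_update: "\<forall>k. f (x k) - fstar > \<epsilon> \<longrightarrow> pbm_descent \<beta> f fm x z k \<longrightarrow> x (Suc k) = z (Suc k)"
    and null_update: "\<forall>k. f (x k) - fstar > \<epsilon> \<longrightarrow> \<not> pbm_descent \<beta> f fm x z k \<longrightarrow> x (Suc k) = x k"
    and model_below: "\<forall>k. f (x k) - fstar > \<epsilon> \<longrightarrow> (\<forall>u. fm (Suc k) u \<le> f u)"
    and model_cut: "\<forall>k. f (x k) - fstar > \<epsilon> \<longrightarrow>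
        (\<forall>u. fm (Suc k) u \<ge> f (z (Suc k)) + inner (g (z (Suc k))) (u - z (Suc k)))"
    and model_agg: "\<forall>k. f (x k) - fstar > \<epsilon> \<longrightarrow> \<not> pbm_descent \<beta> f fm x z k \<longrightarrow>
        (\<forall>u. fm (Suc k) u \<ge> fm k (z (Suc k)) + inner (\<rho> k *\<^sub>R (x k - z (Suc k))) (u - z (Suc k)))"
    and eps: "0 < \<epsilon>" "\<epsilon> \<le> f (x 0) - fstar"
begin

abbreviation descent :: "nat \<Rightarrow> bool" where
  "descent \<equiv> pbm_descent \<beta> f fm x z"

definition \<Delta> :: "nat \<Rightarrow> real" where
  "\<Delta> k = f (x k) - fstar"

definition active :: "nat \<Rightarrow> bool" where
  "active k \<longleftrightarrow> \<epsilon> < \<Delta> k"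

definition prox_gap :: "nat \<Rightarrow> real" where
  "prox_gap k = f (x k) - (fm k (z (Suc k)) + \<rho> k / 2 * (norm (z (Suc k) - x k))\<^sup>2)"

definition descents :: "nat \<Rightarrow> nat" where
  "descents N = card {k. k < N \<and> descent k}"

definition nulls :: "nat \<Rightarrow> nat" where
  "nulls N = card {k. k < N \<and> \<not> descent k}"

lemma M_pos: "0 < M"
proof -
  obtain u where u: "f u = fstar"
    using Xstar_ne by blast
  have "0 < f (x 0) - f u"
    using eps u by simp
  also have "\<dots> \<le> M * norm (x 0 - u)"
    using abs_ge_self[of "f (x 0) - f u"] lipschitz[rule_format, of "x 0" u] by linarith
  finally show ?thesis
    by (simp add: zero_less_mult_iff)
qed

lemma subgradient_norm_le: "norm (g u) \<le> M"
  using subgradient_norm_le_lipschitz subgrad_oracle lipschitz M_pos by fastforce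

lemma nearest_optimum:
  obtains v where "f v = fstar" "infdist u {v. f v = fstar} = dist u v"
proof -
  have "M-lipschitz_on UNIV f"
    using lipschitz M_pos by (intro lipschitz_onI) (auto simp: dist_real_def dist_norm)
  then have "closed {v. f v = fstar}"
    by (intro closed_Collect_eq lipschitz_on_continuous_on continuous_on_const)
  then show ?thesis
    using infdist_attains_inf[of "{v. f v = fstar}" u] Xstar_ne that by blast
qed

lemma \<Delta>_pos: "active k \<Longrightarrow> 0 < \<Delta> k"
  using eps unfolding active_def by simp

lemma rho_pos: "active k \<Longrightarrow> 0 < \<rho> k"
  using \<Delta>_pos[of k] mu_pos rho_def unfolding \<Delta>_def by simp

lemma model_le:
  assumes "\<forall>j<k. active j"
  shows "fm k u \<le> f u"
proof (cases k)
  case 0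
  then show ?thesis
    using fm0 subgrad_oracle unfolding is_subgradient_def by simp
next
  case (Suc j)
  then show ?thesis
    using assms model_below unfolding active_def \<Delta>_def by simp
qed

lemma prox_gap_ge_half:
  assumes act: "active k" and below: "\<forall>u. fm k u \<le> f u"
  shows "\<Delta> k / 2 \<le> prox_gap k"
proof -
  obtain v where v: "f v = fstar" "infdist (x k) {v. f v = fstar} = dist (x k) v"
    by (rule nearest_optimum)
  have "\<mu> * dist (x k) v powr p \<le> \<Delta> k"
    using growth v(2) unfolding \<Delta>_def by metis
  then have "\<rho> k * (dist (x k) v)\<^sup>2 \<le> \<Delta> k"
    using stepsize_dist_sq_le[OF mu_pos p_ge \<Delta>_pos[OF act] zero_le_dist] rho_def
    unfolding \<Delta>_def by simp
  then have "\<rho> k * (norm (v - x k))\<^sup>2 \<le> \<Delta> k"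
    by (simp add: dist_norm norm_minus_commute)
  moreover have "fm k (z (Suc k)) + \<rho> k / 2 * (norm (z (Suc k) - x k))\<^sup>2
      \<le> fm k v + \<rho> k / 2 * (norm (v - x k))\<^sup>2"
    using prox_step act unfolding active_def \<Delta>_def by blast
  moreover have "fm k v \<le> fstar"
    using below v by metis
  ultimately show ?thesis
    unfolding prox_gap_def \<Delta>_def by simp
qed

lemma descent_step_contracts:
  assumes act: "active k" and desc: "descent k" and below: "\<forall>u. fm k u \<le> f u"
  shows "\<Delta> (Suc k) \<le> (1 - \<beta> / 2) * \<Delta> k"
proof -
  have "0 \<le> \<rho> k / 2 * (norm (z (Suc k) - x k))\<^sup>2"
    using rho_pos[OF act] by simp
  then have "\<Delta> k / 2 \<le> f (x k) - fm k (z (Suc k))"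
    using prox_gap_ge_half[OF act below] unfolding prox_gap_def by linarith
  then have "\<beta> * (\<Delta> k / 2) \<le> \<beta> * (f (x k) - fm k (z (Suc k)))"
    using beta by (intro mult_left_mono) auto
  then have "\<beta> * (\<Delta> k / 2) \<le> f (x k) - f (z (Suc k))"
    using desc unfolding pbm_descent_def by linarith
  moreover have "x (Suc k) = z (Suc k)"
    using descent_update act desc unfolding active_def \<Delta>_def by blast
  ultimately show ?thesis
    unfolding \<Delta>_def by (simp add: algebra_simps)
qed

lemma null_step_stays:
  assumes "active k" "\<not> descent k"
  shows "x (Suc k) = x k" "\<Delta> (Suc k) = \<Delta> k" "\<rho> (Suc k) = \<rho> k"
proof -
  show x: "x (Suc k) = x k"
    using null_update assms unfolding active_def \<Delta>_def by blast
  show "\<Delta> (Suc k) = \<Delta> k"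
    unfolding \<Delta>_def x ..
  show "\<rho> (Suc k) = \<rho> k"
    using rho_def x by simp
qed

lemma null_step_prox_gap:
  assumes act: "active k" and null: "\<not> descent k" and below: "\<forall>u. fm k u \<le> f u"
    and bounded: "\<rho> k * prox_gap k \<le> M\<^sup>2 / 2"
  shows "prox_gap (Suc k) \<le> prox_gap k - (1 - \<beta>)\<^sup>2 * (prox_gap k)\<^sup>2 * \<rho> k / (4 * M\<^sup>2)"
proof -
  have act': "f (x k) - fstar > \<epsilon>"
    using act unfolding active_def \<Delta>_def .
  have "f (x k) - (fm (Suc k) (z (Suc (Suc k))) + \<rho> k / 2 * (norm (z (Suc (Suc k)) - x k))\<^sup>2)
      \<le> prox_gap k - (1 - \<beta>)\<^sup>2 * (prox_gap k)\<^sup>2 * \<rho> k / (4 * M\<^sup>2)"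
  proof (rule null_step_prox_gap_decrease[where m = "fm k" and m' = "fm (Suc k)"])
    show "0 \<le> prox_gap k"
      using prox_gap_ge_half[OF act below] \<Delta>_pos[OF act] by simp
    show "f (x k) - f (z (Suc k)) < \<beta> * (f (x k) - fm k (z (Suc k)))"
      using null unfolding pbm_descent_def by simp
  qed (use rho_pos[OF act] M_pos beta bounded subgradient_norm_le model_agg model_cut act' null
       in \<open>auto simp: prox_gap_def\<close>)
  then show ?thesis
    unfolding prox_gap_def[of "Suc k"] null_step_stays[OF act null] .
qed

lemma prox_gap_bounded_of_minorant:
  assumes act: "active k" and minorant: "\<forall>u. f (x k) + inner (g (x k)) (u - x k) \<le> fm k u"
  shows "\<rho> k * prox_gap k \<le> M\<^sup>2 / 2"
proof -
  have "\<rho> k * prox_gap k \<le> (norm (g (x k)))\<^sup>2 / 2"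
    unfolding prox_gap_def by (rule prox_gap_le_of_linear_minorant[OF rho_pos[OF act] minorant])
  also have "\<dots> \<le> M\<^sup>2 / 2"
    using subgradient_norm_le by (simp add: power_mono)
  finally show ?thesis .
qed

lemma prox_gap_bounded: "(\<forall>j\<le>N. active j) \<Longrightarrow> \<rho> N * prox_gap N \<le> M\<^sup>2 / 2"
proof (induction N)
  case 0
  then show ?case
    using fm0 by (intro prox_gap_bounded_of_minorant) auto
next
  case (Suc N)
  then have act: "active N" "active (Suc N)" and IH: "\<rho> N * prox_gap N \<le> M\<^sup>2 / 2"
    by auto
  have below: "\<forall>u. fm N u \<le> f u"
    using model_le Suc.prems by simp
  show ?case
  proof (cases "descent N")
    case True
    have "x (Suc N) = z (Suc N)"
      using descent_update act True unfolding active_def \<Delta>_def by blast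
    then have "\<forall>u. f (x (Suc N)) + inner (g (x (Suc N))) (u - x (Suc N)) \<le> fm (Suc N) u"
      using model_cut act unfolding active_def \<Delta>_def by simp
    then show ?thesis
      using act(2) by (rule prox_gap_bounded_of_minorant[rotated])
  next
    case False
    have "0 \<le> (1 - \<beta>)\<^sup>2 * (prox_gap N)\<^sup>2 * \<rho> N / (4 * M\<^sup>2)"
      using rho_pos[OF act(1)] by simp
    then have "prox_gap (Suc N) \<le> prox_gap N"
      using null_step_prox_gap[OF act(1) False below IH] by linarith
    then have "\<rho> N * prox_gap (Suc N) \<le> \<rho> N * prox_gap N"
      using rho_pos[OF act(1)] by (simp add: mult_left_mono)
    then show ?thesis
      using IH null_step_stays(3)[OF act(1) False] by simp
  qed
qed

lemma gap_contraction: "(\<forall>j<N. active j) \<Longrightarrow> \<Delta> N \<le> (1 - \<beta> / 2) ^ descents N * \<Delta> 0"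
proof (induction N)
  case (Suc N)
  then have act: "active N" and IH: "\<Delta> N \<le> (1 - \<beta> / 2) ^ descents N * \<Delta> 0"
    by auto
  show ?case
  proof (cases "descent N")
    case True
    have "\<Delta> (Suc N) \<le> (1 - \<beta> / 2) * \<Delta> N"
      using descent_step_contracts[OF act True] model_le Suc.prems by simp
    also have "\<dots> \<le> (1 - \<beta> / 2) * ((1 - \<beta> / 2) ^ descents N * \<Delta> 0)"
      using IH beta by (intro mult_left_mono) auto
    finally show ?thesis
      using True unfolding descents_def card_less_Suc_filter by simp
  next
    case False
    then show ?thesis
      using IH null_step_stays[OF act False] unfolding descents_def card_less_Suc_filter by simp
  qed
qed (simp add: descents_def)

definition descent_bound :: real where
  "descent_bound = 2 * ln (\<Delta> 0 / \<epsilon>) / \<beta>"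

lemma descents_lt: "(\<forall>j\<le>N. active j) \<Longrightarrow> real (descents N) < descent_bound"
proof -
  assume act: "\<forall>j\<le>N. active j"
  define n where "n = descents N"
  have b: "0 < 1 - \<beta> / 2"
    using beta by simp
  have \<Delta>0: "0 < \<Delta> 0"
    using eps unfolding \<Delta>_def by simp
  have "\<epsilon> < (1 - \<beta> / 2) ^ n * \<Delta> 0"
    using act gap_contraction[of N] unfolding active_def n_def by fastforce
  then have "ln \<epsilon> < ln ((1 - \<beta> / 2) ^ n * \<Delta> 0)"
    using eps by simp
  also have "\<dots> = real n * ln (1 - \<beta> / 2) + ln (\<Delta> 0)"
    using b \<Delta>0 by (simp add: ln_mult ln_realpow)
  also have "real n * ln (1 - \<beta> / 2) \<le> real n * (- \<beta> / 2)"
    using ln_le_minus_one[OF b] by (intro mult_left_mono) auto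
  finally have "real n * \<beta> / 2 < ln (\<Delta> 0 / \<epsilon>)"
    using \<Delta>0 eps by (simp add: ln_div)
  then show ?thesis
    unfolding descent_bound_def n_def using beta by (simp add: field_simps)
qed

definition q :: real where
  "q = 2 - 2 / p"

definition \<theta> :: real where
  "\<theta> = (1 - \<beta> / 2) powr q"

definition null_coeff :: real where
  "null_coeff = 8 * M\<^sup>2 / ((1 - \<beta>)\<^sup>2 * \<mu> powr (2 / p))"

definition inv_gap :: "nat \<Rightarrow> real" where
  "inv_gap k = 4 * M\<^sup>2 / ((1 - \<beta>)\<^sup>2 * \<rho> k * prox_gap k)"

text \<open>An upper bound for the sum of \<^term>\<open>null_coeff / \<Delta> j powr q\<close> over the descent
  steps j < N: at each descent step \<^term>\<open>\<Delta> j powr q\<close> shrinks by the factor \<theta>.\<close>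
definition null_budget :: "nat \<Rightarrow> real" where
  "null_budget N =
     (if 1 < p then null_coeff / \<Delta> N powr q * \<theta> / (1 - \<theta>) else null_coeff * descents N)"

lemma q_nonneg: "0 \<le> q"
  using p_ge unfolding q_def by (simp add: field_simps)

lemma theta_bounds: "1 < p \<Longrightarrow> 0 < \<theta> \<and> \<theta> < 1"
proof -
  assume "1 < p"
  then have "0 < q"
    unfolding q_def by (simp add: field_simps)
  then have "(1 - \<beta> / 2) powr q < 1 powr q"
    using beta by (intro powr_less_mono2) auto
  then show ?thesis
    using beta unfolding \<theta>_def by simp
qed

lemma null_coeff_nonneg: "0 \<le> null_coeff"
  unfolding null_coeff_def by simp

lemma rho_mult_\<Delta>: "active k \<Longrightarrow> \<rho> k * \<Delta> k = \<mu> powr (2 / p) * \<Delta> k powr q"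
proof -
  assume "active k"
  then have "\<Delta> k powr (1 - 2 / p) * \<Delta> k = \<Delta> k powr q"
    using powr_add[of "\<Delta> k" "1 - 2 / p" 1] \<Delta>_pos[of k] unfolding q_def by simp
  moreover have "\<rho> k = \<mu> powr (2 / p) * \<Delta> k powr (1 - 2 / p)"
    using rho_def unfolding \<Delta>_def by simp
  ultimately show ?thesis
    by (simp add: mult.assoc)
qed

lemma inv_gap_pos:
  assumes act: "active k" and below: "\<forall>u. fm k u \<le> f u"
  shows "0 < inv_gap k"
proof -
  have "0 < prox_gap k"
    using prox_gap_ge_half[OF act below] \<Delta>_pos[OF act] by simp
  then show ?thesis
    unfolding inv_gap_def using M_pos rho_pos[OF act] beta by simp
qed

lemma inv_gap_le:
  assumes act: "active k" and below: "\<forall>u. fm k u \<le> f u"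
  shows "inv_gap k \<le> null_coeff / \<Delta> k powr q"
proof -
  have "inv_gap k \<le> 4 * M\<^sup>2 / ((1 - \<beta>)\<^sup>2 * \<rho> k * (\<Delta> k / 2))"
    unfolding inv_gap_def using prox_gap_ge_half[OF act below] \<Delta>_pos[OF act] rho_pos[OF act] beta
    by (intro divide_left_mono mult_left_mono mult_pos_pos) auto
  also have "\<dots> = 8 * M\<^sup>2 / ((1 - \<beta>)\<^sup>2 * (\<rho> k * \<Delta> k))"
    by (simp add: field_simps)
  also have "\<dots> = null_coeff / \<Delta> k powr q"
    unfolding rho_mult_\<Delta>[OF act] null_coeff_def by (simp add: field_simps)
  finally show ?thesis .
qed

lemma inv_gap_null_step:
  assumes act: "active k" and null: "\<not> descent k" and below: "\<forall>u. fm k u \<le> f u"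
    and bounded: "\<rho> k * prox_gap k \<le> M\<^sup>2 / 2"
  shows "inv_gap k + 1 \<le> inv_gap (Suc k)"
proof -
  define c where "c = (1 - \<beta>)\<^sup>2 * \<rho> k / (4 * M\<^sup>2)"
  have act': "active (Suc k)"
    using act null_step_stays(2)[OF act null] unfolding active_def by simp
  have below': "\<forall>u. fm (Suc k) u \<le> f u"
    using model_below act unfolding active_def \<Delta>_def by blast
  have "1 / (c * prox_gap k) + 1 \<le> 1 / (c * prox_gap (Suc k))"
  proof (rule reciprocal_gain_of_quadratic_decrease)
    show "0 < c"
      unfolding c_def using beta rho_pos[OF act] M_pos by simp
    show "0 < prox_gap k" "0 < prox_gap (Suc k)"
      using prox_gap_ge_half \<Delta>_pos act act' below below' by fastforce+
    show "prox_gap (Suc k) \<le> prox_gap k - c * (prox_gap k)\<^sup>2"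
      using null_step_prox_gap[OF act null below bounded] unfolding c_def by (simp add: field_simps)
  qed
  moreover have "inv_gap k = 1 / (c * prox_gap k)" "inv_gap (Suc k) = 1 / (c * prox_gap (Suc k))"
    unfolding inv_gap_def c_def null_step_stays(3)[OF act null] using M_pos by (simp_all add: field_simps)
  ultimately show ?thesis
    by simp
qed

lemma null_budget_descent_step:
  assumes act: "active N" "active (Suc N)" and desc: "descent N" and below: "\<forall>u. fm N u \<le> f u"
  shows "null_budget N + null_coeff / \<Delta> N powr q \<le> null_budget (Suc N)"
proof (cases "1 < p")
  case True
  have "\<Delta> (Suc N) powr q \<le> ((1 - \<beta> / 2) * \<Delta> N) powr q"
    using descent_step_contracts[OF act(1) desc below] \<Delta>_pos[OF act(2)] q_nonneg
    by (intro powr_mono2) auto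
  also have "\<dots> = \<theta> * \<Delta> N powr q"
    unfolding \<theta>_def using beta \<Delta>_pos[OF act(1)] by (simp add: powr_mult)
  finally have "null_coeff / \<Delta> N powr q * \<theta> / (1 - \<theta>) + null_coeff / \<Delta> N powr q
      \<le> null_coeff / \<Delta> (Suc N) powr q * \<theta> / (1 - \<theta>)"
    using theta_bounds[OF True] \<Delta>_pos[OF act(1)] \<Delta>_pos[OF act(2)]
    by (intro geometric_budget_step null_coeff_nonneg) auto
  then show ?thesis
    unfolding null_budget_def using True by simp
next
  case False
  then have "q = 0"
    using p_ge unfolding q_def by simp
  then show ?thesis
    unfolding null_budget_def descents_def card_less_Suc_filter
    using False desc \<Delta>_pos[OF act(1)] by (simp add: algebra_simps)
qed

lemma null_budget_nonneg: "0 \<le> null_budget N"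
  unfolding null_budget_def using theta_bounds null_coeff_nonneg
  by (auto intro!: divide_nonneg_pos mult_nonneg_nonneg divide_nonneg_nonneg)

lemma nulls_le_budget: "(\<forall>j\<le>N. active j) \<Longrightarrow> real (nulls N) \<le> null_budget N + inv_gap N"
proof (induction N)
  case 0
  then show ?case
    using inv_gap_pos[of 0] model_le[of 0] null_budget_nonneg[of 0] unfolding nulls_def by simp
next
  case (Suc N)
  then have act: "active N" "active (Suc N)" and IH: "real (nulls N) \<le> null_budget N + inv_gap N"
    by auto
  have below: "\<forall>u. fm N u \<le> f u" and below': "\<forall>u. fm (Suc N) u \<le> f u"
    using model_le Suc.prems by auto
  show ?case
  proof (cases "descent N")
    case True
    then have "nulls (Suc N) = nulls N"
      unfolding nulls_def card_less_Suc_filter by simp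
    then show ?thesis
      using IH inv_gap_le[OF act(1) below] inv_gap_pos[OF act(2) below']
        null_budget_descent_step[OF act True below] by linarith
  next
    case False
    then have "nulls (Suc N) = nulls N + 1" "null_budget (Suc N) = null_budget N"
      unfolding nulls_def null_budget_def descents_def card_less_Suc_filter
      using null_step_stays(2)[OF act(1) False] by simp_all
    then show ?thesis
      using IH inv_gap_null_step[OF act(1) False below] prox_gap_bounded[of N] Suc.prems by simp
  qed
qed

lemma nulls_le:
  assumes act: "\<forall>j\<le>N. active j"
  shows "real (nulls N)
    \<le> (if 1 < p then null_coeff / \<epsilon> powr q / (1 - \<theta>) else null_coeff * (descents N + 1))"
proof -
  have bound: "real (nulls N) \<le> null_budget N + null_coeff / \<Delta> N powr q"
    using nulls_le_budget[OF act] inv_gap_le[of N] act model_le by fastforce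
  show ?thesis
  proof (cases "1 < p")
    case True
    note \<theta> = theta_bounds[OF True]
    have "null_budget N + null_coeff / \<Delta> N powr q = null_coeff / \<Delta> N powr q / (1 - \<theta>)"
      unfolding null_budget_def using True \<theta> \<Delta>_pos[of N] act by (simp add: field_simps)
    also have "\<dots> \<le> null_coeff / \<epsilon> powr q / (1 - \<theta>)"
      using act eps q_nonneg null_coeff_nonneg \<theta> unfolding active_def
      by (intro divide_right_mono divide_left_mono powr_mono2 mult_pos_pos) auto
    finally show ?thesis
      using bound True by simp
  next
    case False
    then have "q = 0"
      using p_ge unfolding q_def by simp
    then show ?thesis
      using bound False \<Delta>_pos[of N] act unfolding null_budget_def by (simp add: algebra_simps)
  qed
qed

lemma descents_add_nulls: "descents N + nulls N = N"
  by (induction N) (simp_all add: descents_def nulls_def card_less_Suc_filter)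

lemma eventually_inactive: "\<exists>K. \<not> active K"
proof (rule ccontr)
  assume "\<nexists>K. \<not> active K"
  then have act: "\<forall>j\<le>N. active j" for N
    by simp
  define C where
    "C = (if 1 < p then null_coeff / \<epsilon> powr q / (1 - \<theta>) else null_coeff * (descent_bound + 1))"
  have "real N < descent_bound + C" for N
  proof -
    have desc: "real (descents N) < descent_bound"
      by (rule descents_lt[OF act])
    then have "null_coeff * (descents N + 1) \<le> null_coeff * (descent_bound + 1)"
      using null_coeff_nonneg by (intro mult_left_mono) auto
    then have "real (nulls N) \<le> C"
      using nulls_le[OF act, of N] unfolding C_def by (auto split: if_splits)
    then show ?thesis
      using desc descents_add_nulls[of N] by linarith
  qed
  from this[of "nat \<lceil>descent_bound + C\<rceil>"] show False
    by linarith
qed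

definition null_bound :: real where
  "null_bound =
     (if 1 < p then null_coeff / \<epsilon> powr q / (1 - \<theta>) else null_coeff * \<lceil>descent_bound\<rceil>)"

lemma first_inactive_bounds:
  obtains K where "\<not> active K" "\<forall>k<K. active k"
    "int (descents K) \<le> \<lceil>descent_bound\<rceil>" "real (nulls K) \<le> null_bound"
proof -
  define K where "K = (LEAST K. \<not> active K)"
  have stop: "\<not> active K"
    unfolding K_def using eventually_inactive by (rule LeastI_ex)
  have before: "\<forall>k<K. active k"
    unfolding K_def using not_less_Least by blast
  have "int (descents K) \<le> \<lceil>descent_bound\<rceil> \<and> real (nulls K) \<le> null_bound"
  proof (cases K)
    case 0
    have "0 \<le> descent_bound"
      unfolding descent_bound_def \<Delta>_def using eps beta by simp
    then show ?thesis
      unfolding null_bound_def descents_def nulls_def 0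
      using null_coeff_nonneg theta_bounds by (auto intro!: divide_nonneg_pos divide_nonneg_nonneg)
  next
    case (Suc N)
    have act: "\<forall>j\<le>N. active j"
      using before Suc by auto
    have desc: "descent N"
      using null_step_stays(2)[of N] act stop Suc unfolding active_def by force
    then have counts: "descents K = descents N + 1" "nulls K = nulls N"
      unfolding descents_def nulls_def Suc card_less_Suc_filter by simp_all
    have "int (descents N) < \<lceil>descent_bound\<rceil>"
      using descents_lt[OF act] by (simp add: less_ceiling_iff)
    then have desc_le: "int (descents K) \<le> \<lceil>descent_bound\<rceil>"
      unfolding counts by simp
    then have "null_coeff * (descents N + 1) \<le> null_coeff * \<lceil>descent_bound\<rceil>"
      using null_coeff_nonneg unfolding counts by (intro mult_left_mono) linarith+
    then have "real (nulls K) \<le> null_bound"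
      using nulls_le[OF act] unfolding null_bound_def counts by (auto split: if_splits)
    with desc_le show ?thesis ..
  qed
  with stop before that show ?thesis
    by blast
qed

end

theorem theorem6:
  fixes f :: "'a::euclidean_space \<Rightarrow> real"
    and g :: "'a \<Rightarrow> 'a"
    and fstar M \<mu> p \<beta> \<epsilon> :: real
    and x z :: "nat \<Rightarrow> 'a"
    and fm :: "nat \<Rightarrow> 'a \<Rightarrow> real"
    and \<rho> :: "nat \<Rightarrow> real"
  assumes convex: "convex_on UNIV f"
    and lipschitz: "\<forall>u v. \<bar>f u - f v\<bar> \<le> M * norm (u - v)"
    and fstar_lb: "\<forall>u. fstar \<le> f u"
    and Xstar_ne: "\<exists>u. f u = fstar"
    and mu_pos: "\<mu> > 0" and p_ge: "p \<ge> 1"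
    and growth: "\<forall>u. f u - fstar \<ge> \<mu> * (infdist u {v. f v = fstar}) powr p"
    and subgrad_oracle: "\<forall>u. is_subgradient f u (g u)"
    and beta: "0 < \<beta>" "\<beta> < 1"
    and x0: "z 0 = x 0"
    and fm0: "\<forall>u. fm 0 u = f (x 0) + inner (g (x 0)) (u - x 0)"
    and rho_def: "\<forall>k. \<rho> k = \<mu> powr (2 / p) * (f (x k) - fstar) powr (1 - 2 / p)"
    and models_convex: "\<forall>k. f (x k) - fstar > \<epsilon> \<longrightarrow> convex_on UNIV (fm k)"
    and prox_step: "\<forall>k. f (x k) - fstar > \<epsilon> \<longrightarrow>
        (\<forall>u. fm k (z (Suc k)) + \<rho> k / 2 * (norm (z (Suc k) - x k))\<^sup>2
              \<le> fm k u + \<rho> k / 2 * (norm (u - x k))\<^sup>2)"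
    and descent_update: "\<forall>k. f (x k) - fstar > \<epsilon> \<longrightarrow> pbm_descent \<beta> f fm x z k \<longrightarrow> x (Suc k) = z (Suc k)"
    and null_update: "\<forall>k. f (x k) - fstar > \<epsilon> \<longrightarrow> \<not> pbm_descent \<beta> f fm x z k \<longrightarrow> x (Suc k) = x k"
    and model_below: "\<forall>k. f (x k) - fstar > \<epsilon> \<longrightarrow> (\<forall>u. fm (Suc k) u \<le> f u)"
    and model_cut: "\<forall>k. f (x k) - fstar > \<epsilon> \<longrightarrow>
        (\<forall>u. fm (Suc k) u \<ge> f (z (Suc k)) + inner (g (z (Suc k))) (u - z (Suc k)))"
    and model_agg: "\<forall>k. f (x k) - fstar > \<epsilon> \<longrightarrow> \<not> pbm_descent \<beta> f fm x z k \<longrightarrow>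
        (\<forall>u. fm (Suc k) u \<ge> fm k (z (Suc k)) + inner (\<rho> k *\<^sub>R (x k - z (Suc k))) (u - z (Suc k)))"
    and eps: "0 < \<epsilon>" "\<epsilon> \<le> f (x 0) - fstar"
  shows "\<exists>K. f (x K) - fstar \<le> \<epsilon> \<and> (\<forall>k<K. f (x k) - fstar > \<epsilon>)
     \<and> int (card {k. k < K \<and> pbm_descent \<beta> f fm x z k})
          \<le> \<lceil>2 * ln ((f (x 0) - fstar) / \<epsilon>) / \<beta>\<rceil>
     \<and> real (card {k. k < K \<and> \<not> pbm_descent \<beta> f fm x z k})
          \<le> (if p > 1
              then (1 / (1 - (1 - \<beta> / 2) powr (2 - 2 / p)))
                   * (8 * M\<^sup>2 / ((1 - \<beta>)\<^sup>2 * \<mu> powr (2 / p) * \<epsilon> powr (2 - 2 / p)))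
              else 8 * M\<^sup>2 / ((1 - \<beta>)\<^sup>2 * \<mu>\<^sup>2)
                   * real_of_int \<lceil>2 * ln ((f (x 0) - fstar) / \<epsilon>) / \<beta>\<rceil>)"
proof -
  interpret proximal_bundle_run f g fstar M \<mu> p \<beta> \<epsilon> x z fm \<rho>
    by (rule proximal_bundle_run.intro)
      (fact lipschitz Xstar_ne mu_pos p_ge growth subgrad_oracle beta fm0 rho_def prox_step
        descent_update null_update model_below model_cut model_agg eps)+
  obtain K where "\<not> active K" "\<forall>k<K. active k"
    "int (descents K) \<le> \<lceil>descent_bound\<rceil>" "real (nulls K) \<le> null_bound"
    by (rule first_inactive_bounds)
  moreover have "p = 1" if "\<not> 1 < p"
    using p_ge that by simp
  ultimately show ?thesis
    unfolding active_def descents_def nulls_def descent_bound_def null_bound_def null_coeff_def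
      \<theta>_def q_def \<Delta>_def
    using mu_pos by (intro exI[of _ K]) (auto simp: field_simps powr_numeral)
qed

end
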